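(* Let $(X,\|\cdot\|)$ be a normed linear space, let $I$ be a non-trivial admissible ideal in $\mathbb{N}$ and let $r>0$. A sequence $x=\{x_k\}_{k\in\mathbb{N}}$ in $X$ is rough $I$-statistically convergent with roughness degree $r$ to $\xi\in X$ if and only if there exists a sequence $y=\{y_k\}_{k\in\mathbb{N}}$ in $X$ which is $I$-statistically convergent to $\xi$ and satisfies $\|x_k-y_k\|\le r$ for all $k\in\mathbb{N}$.
   Context: An ideal $I$ in $\mathbb{N}$ is a family of subsets of $\mathbb{N}$ containing $\emptyset$, closed under finite unions and under taking subsets; it is non-trivial if $\mathbb{N}\notin I$ and admissible if $\{n\}\in I$ for every $n$. A sequence $y$ in $X$ is $I$-statistically convergent to $\xi$ if for every $\varepsilon>0$ and $\delta>0$, $\{n\in\mathbb{N}:\frac1n|\{k\le n:\|y_k-\xi\|\ge\varepsilon\}|\ge\delta\}\in I$. A sequence $x$ is rough $I$-statistically convergent with roughness degree $r\ge0$ to $\xi$ if for every $\varepsilon>0$ and $\delta>0$, $\{n\in\mathbb{N}:\frac1n|\{k\le n:\|x_k-\xi\|\ge r+\varepsilon\}|\ge\delta\}\in I$. *)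

theory Defs
  imports "HOL-Analysis.Analysis"
begin

text \<open>Convention: the paper's natural numbers are the positive integers {1,2,...},
  rendered as the set PosNat = {1..} of type nat. Sequences are functions nat => 'a
  of which only the values at positive indices matter.\<close>

abbreviation PosNat :: "nat set" where "PosNat \<equiv> {1..}"

definition ideal_on_N :: "nat set set \<Rightarrow> bool" where
  "ideal_on_N I \<longleftrightarrow> (\<forall>A\<in>I. A \<subseteq> PosNat) \<and> {} \<in> I \<and>
     (\<forall>A\<in>I. \<forall>B\<in>I. A \<union> B \<in> I) \<and> (\<forall>A\<in>I. \<forall>B. B \<subseteq> A \<longrightarrow> B \<in> I)"

definition nontrivial_ideal :: "nat set set \<Rightarrow> bool" where
  "nontrivial_ideal I \<longleftrightarrow> PosNat \<notin> I"

definition admissible_ideal :: "nat set set \<Rightarrow> bool" where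
  "admissible_ideal I \<longleftrightarrow> (\<forall>n\<in>PosNat. {n} \<in> I)"

definition I_stat_conv ::
  "nat set set \<Rightarrow> (nat \<Rightarrow> 'a::real_normed_vector) \<Rightarrow> 'a \<Rightarrow> bool" where
  "I_stat_conv I y \<xi> \<longleftrightarrow> (\<forall>\<epsilon>>0. \<forall>\<delta>>0.
     {n\<in>PosNat. card {k\<in>{1..n}. norm (y k - \<xi>) \<ge> \<epsilon>} / real n \<ge> \<delta>} \<in> I)"

definition rough_I_stat_conv ::
  "nat set set \<Rightarrow> real \<Rightarrow> (nat \<Rightarrow> 'a::real_normed_vector) \<Rightarrow> 'a \<Rightarrow> bool" where
  "rough_I_stat_conv I r x \<xi> \<longleftrightarrow> (\<forall>\<epsilon>>0. \<forall>\<delta>>0.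
     {n\<in>PosNat. card {k\<in>{1..n}. norm (x k - \<xi>) \<ge> r + \<epsilon>} / real n \<ge> \<delta>} \<in> I)"

end

theory Submission
  imports Defs
begin

text \<open>Pulling each \<open>x k\<close> radially towards \<open>\<xi>\<close> by at most \<open>r\<close> gives a sequence \<open>y\<close> with
  \<open>\<parallel>y k - \<xi>\<parallel> = max 0 (\<parallel>x k - \<xi>\<parallel> - r)\<close>, so \<open>\<parallel>y k - \<xi>\<parallel> \<ge> \<epsilon>\<close> exactly when
  \<open>\<parallel>x k - \<xi>\<parallel> \<ge> r + \<epsilon>\<close>: the exceptional index sets of \<open>y\<close> and of \<open>x\<close> coincide.
  Conversely, if \<open>\<parallel>x k - y k\<parallel> \<le> r\<close> then by the triangle inequality every exceptional
  index of \<open>x\<close> for \<open>r + \<epsilon>\<close> is exceptional for \<open>y\<close> and \<open>\<epsilon>\<close>, and ideals are closed under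
  subsets.\<close>

definition radial_shrink :: "real \<Rightarrow> 'a::real_normed_vector \<Rightarrow> 'a" where
  "radial_shrink r v = (if norm v \<le> r then 0 else (1 - r / norm v) *\<^sub>R v)"

lemma norm_radial_shrink:
  assumes "r \<ge> 0"
  shows "norm (radial_shrink r v) = max 0 (norm v - r)"
proof (cases "norm v \<le> r")
  case False
  then have "norm v > 0" using assms by linarith
  then show ?thesis
    using False by (simp add: radial_shrink_def abs_of_nonneg field_simps)
qed (simp add: radial_shrink_def)

lemma norm_diff_radial_shrink:
  assumes "r \<ge> 0"
  shows "norm (v - radial_shrink r v) \<le> r"
proof (cases "norm v \<le> r")
  case False
  then have pos: "norm v > 0" using assms by linarith
  have "v - radial_shrink r v = (r / norm v) *\<^sub>R v"
    using False by (simp add: radial_shrink_def algebra_simps)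
  then show ?thesis
    using pos assms by simp
qed (simp add: radial_shrink_def)

lemma density_superlevel_set_mono:
  assumes "\<And>k. k \<ge> 1 \<Longrightarrow> P k \<Longrightarrow> Q k"
  shows "{n\<in>PosNat. card {k\<in>{1..n}. P k} / real n \<ge> \<delta>}
    \<subseteq> {n\<in>PosNat. card {k\<in>{1..n}. Q k} / real n \<ge> \<delta>}"
proof -
  have "card {k\<in>{1..n}. P k} \<le> card {k\<in>{1..n}. Q k}" for n
    by (rule card_mono) (auto intro: assms)
  then have "card {k\<in>{1..n}. P k} / real n \<le> card {k\<in>{1..n}. Q k} / real n" for n
    by (simp add: divide_right_mono)
  then show ?thesis
    by (auto intro: order_trans)
qed

lemma rough_I_stat_conv_if_near_I_stat_conv:
  assumes "ideal_on_N I" and "I_stat_conv I y \<xi>"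
    and near: "\<forall>k\<in>PosNat. norm (x k - y k) \<le> r"
  shows "rough_I_stat_conv I r x \<xi>"
  unfolding rough_I_stat_conv_def
proof (intro allI impI)
  fix \<epsilon> \<delta> :: real
  assume "\<epsilon> > 0" "\<delta> > 0"
  then have y_exc: "{n\<in>PosNat. card {k\<in>{1..n}. norm (y k - \<xi>) \<ge> \<epsilon>} / real n \<ge> \<delta>} \<in> I"
    using assms(2) by (simp add: I_stat_conv_def)
  have "norm (y k - \<xi>) \<ge> \<epsilon>" if "k \<ge> 1" "norm (x k - \<xi>) \<ge> r + \<epsilon>" for k
  proof -
    have "norm (x k - \<xi>) \<le> norm (x k - y k) + norm (y k - \<xi>)"
      using norm_triangle_ineq[of "x k - y k" "y k - \<xi>"] by simp
    moreover have "norm (x k - y k) \<le> r"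
      using near \<open>k \<ge> 1\<close> by simp
    ultimately show ?thesis
      using that(2) by linarith
  qed
  then have "{n\<in>PosNat. card {k\<in>{1..n}. norm (x k - \<xi>) \<ge> r + \<epsilon>} / real n \<ge> \<delta>}
      \<subseteq> {n\<in>PosNat. card {k\<in>{1..n}. norm (y k - \<xi>) \<ge> \<epsilon>} / real n \<ge> \<delta>}"
    by (rule density_superlevel_set_mono)
  with y_exc show "{n\<in>PosNat. card {k\<in>{1..n}. norm (x k - \<xi>) \<ge> r + \<epsilon>} / real n \<ge> \<delta>} \<in> I"
    using assms(1) unfolding ideal_on_N_def by blast
qed

lemma I_stat_conv_radial_shrink:
  assumes "r \<ge> 0" and "rough_I_stat_conv I r x \<xi>"
  shows "I_stat_conv I (\<lambda>k. \<xi> + radial_shrink r (x k - \<xi>)) \<xi>"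
proof -
  have "(norm (radial_shrink r (x k - \<xi>)) \<ge> \<epsilon>) = (norm (x k - \<xi>) \<ge> r + \<epsilon>)"
    if "\<epsilon> > 0" for k \<epsilon>
    using that norm_radial_shrink[OF assms(1), of "x k - \<xi>"] by linarith
  then show ?thesis
    using assms(2) by (simp add: I_stat_conv_def rough_I_stat_conv_def)
qed

theorem theorem3p5:
  fixes I :: "nat set set" and r :: real
    and x :: "nat \<Rightarrow> 'a::real_normed_vector" and \<xi> :: 'a
  assumes "ideal_on_N I" and "nontrivial_ideal I" and "admissible_ideal I"
    and "r > 0"
  shows "rough_I_stat_conv I r x \<xi> \<longleftrightarrow>
    (\<exists>y :: nat \<Rightarrow> 'a. I_stat_conv I y \<xi> \<and> (\<forall>k\<in>PosNat. norm (x k - y k) \<le> r))"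
proof
  assume rough: "rough_I_stat_conv I r x \<xi>"
  let ?y = "\<lambda>k. \<xi> + radial_shrink r (x k - \<xi>)"
  have "norm (x k - ?y k) \<le> r" for k
    using norm_diff_radial_shrink[of r "x k - \<xi>"] assms(4) by (simp add: algebra_simps)
  then show "\<exists>y. I_stat_conv I y \<xi> \<and> (\<forall>k\<in>PosNat. norm (x k - y k) \<le> r)"
    using I_stat_conv_radial_shrink[OF _ rough] assms(4) by force
next
  assume "\<exists>y. I_stat_conv I y \<xi> \<and> (\<forall>k\<in>PosNat. norm (x k - y k) \<le> r)"
  then show "rough_I_stat_conv I r x \<xi>"
    using rough_I_stat_conv_if_near_I_stat_conv[OF assms(1)] by blast
qed

end
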